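(* With the notation of the context, for all fixed frequencies, $$|S_k|\lesssim\min\big((N_2\wedge N_3)^{2-\alpha}\log(2+N_1)+N_1,\ (N_1\wedge N_2)^{2-\alpha}\log(2+N_3)+N_3\big),$$ $$|S_{k_1}|\lesssim\min\big(N_3^{2-\alpha}\log(2+N_2)+N_2,\ N_2^{2-\alpha}\log(2+N_3)+N_3\big),$$ $$|S_{k_2}|\lesssim\min\big(N_3^{2-\alpha}\log(2+N_1)+N_1,\ N_1^{2-\alpha}\log(2+N_3)+N_3\big),$$ $$|S_{k_3}|\lesssim\min\big(N_1^{2-\alpha}\log(2+N_2)+N_2,\ N_2^{2-\alpha}\log(2+N_1)+N_1\big).$$
   Context: Fix $\alpha\in(1,2)$, dyadic numbers $1\le N_1,N_2,N_3\le N$, a real number $m$ and a constant $C_0>0$. Let $S$ be the set of $(k,k_1,k_2,k_3)\in\mathbb Z^4$ with $k=k_1-k_2+k_3$, $k_2\notin\{k_1,k_3\}$, $\big||k_1|^\alpha-|k_2|^\alpha+|k_3|^\alpha-|k|^\alpha-m\big|\le C_0$, $|k|\le N$ and $|k_j|\le N_j$ for $j=1,2,3$. When some of the variables are fixed, $S$ with those variables as subscripts denotes the set of the remaining variables for which the quadruple lies in $S$ (e.g. $S_{k_1}=\{(k,k_2,k_3):(k,k_1,k_2,k_3)\in S\}$). $|A|$ is the cardinality of $A$, $a\wedge b=\min(a,b)$. $A\lesssim B$ means $A\le CB$ with $C$ depending only on $\alpha$ and $C_0$. *)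

theory Defs
  imports Complex_Main
begin

definition dyadic :: "nat \<Rightarrow> bool" where
  "dyadic M \<longleftrightarrow> (\<exists>j::nat. M = 2 ^ j)"

definition Sres :: "real \<Rightarrow> real \<Rightarrow> real \<Rightarrow> nat \<Rightarrow> nat \<Rightarrow> nat \<Rightarrow> nat
    \<Rightarrow> (int \<times> int \<times> int \<times> int) set" where
  "Sres \<alpha> C0 m N N1 N2 N3 =
     {(k, k1, k2, k3). k = k1 - k2 + k3 \<and> k2 \<noteq> k1 \<and> k2 \<noteq> k3 \<and>
        \<bar>\<bar>real_of_int k1\<bar> powr \<alpha> - \<bar>real_of_int k2\<bar> powr \<alpha> + \<bar>real_of_int k3\<bar> powr \<alpha>
          - \<bar>real_of_int k\<bar> powr \<alpha> - m\<bar> \<le> C0 \<and>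
        \<bar>k\<bar> \<le> int N \<and> \<bar>k1\<bar> \<le> int N1 \<and> \<bar>k2\<bar> \<le> int N2 \<and> \<bar>k3\<bar> \<le> int N3}"

end

theory Submission
  imports Defs "HOL-Analysis.Harmonic_Numbers"
begin

text \<open>
  Write \<open>\<phi> t = \<bar>t\<bar> powr \<alpha>\<close>. Fixing one frequency and eliminating another through
  \<open>k = k1 - k2 + k3\<close>, the resonance condition becomes \<open>\<bar>\<phi> (y + d) - \<phi> y - c\<bar> \<le> C0\<close>,
  where \<open>y\<close> ranges over \<open>[-L, L]\<close> and \<open>d \<noteq> 0\<close> is a difference of two frequencies.
  Since \<open>\<phi>'\<close> is \<open>\<alpha>\<close> times the signed power \<open>sgn t * \<bar>t\<bar> powr (\<alpha> - 1)\<close>, which has slope at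
  least \<open>(\<alpha> - 1) * R powr (\<alpha> - 2)\<close> on \<open>[-R, R]\<close>, the map \<open>y \<mapsto> \<phi> (y + d) - \<phi> y\<close> is
  monotone with slope \<open>\<greatersim> \<bar>d\<bar> * (L + \<bar>d\<bar>) powr (\<alpha> - 2)\<close>. So it meets a window of width
  \<open>2 * C0\<close> in \<open>\<lesssim> 1 + L powr (2 - \<alpha>) / \<bar>d\<bar>\<close> integers, and summing over \<open>d\<close> gives the
  harmonic sum \<open>L powr (2 - \<alpha>) * ln M + M\<close>.

  This yields every bound except \<open>N2 powr (2 - \<alpha>) * ln N3 + N3\<close> for the \<open>k1\<close>-fibre when
  \<open>N3 \<le> N2\<close>. There, for fixed \<open>k3\<close> and away from the diagonal \<open>\<bar>2 * k2 - k1 - k3\<bar> \<ge> N3\<close>,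
  the map \<open>k2 \<mapsto> \<phi> k2 + \<phi> (k1 + k3 - k2)\<close> has slope \<open>\<greatersim> N3 * N2 powr (\<alpha> - 2)\<close>, so each
  \<open>k3\<close> contributes \<open>\<lesssim> 1 + N2 powr (2 - \<alpha>) / N3\<close>; near the diagonal \<open>k2\<close> lies in an
  interval of length \<open>2 * N3\<close> and the difference argument applies. The symmetry
  \<open>(k1, N1) \<leftrightarrow> (k3, N3)\<close> gives the remaining bounds.
\<close>

section \<open>Derivatives of the dispersion relation\<close>

definition abs_powr :: "real \<Rightarrow> real \<Rightarrow> real" where
  "abs_powr a t = \<bar>t\<bar> powr a"

definition signed_powr :: "real \<Rightarrow> real \<Rightarrow> real" where
  "signed_powr b t = sgn t * \<bar>t\<bar> powr b"

lemma signed_powr_uminus [simp]: "signed_powr b (- t) = - signed_powr b t"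
  by (simp add: signed_powr_def)

lemma has_real_derivative_abs_powr:
  assumes "1 < a"
  shows "(abs_powr a has_real_derivative a * signed_powr (a - 1) t) (at t)"
proof (cases t "0::real" rule: linorder_cases)
  case less
  have "eventually (\<lambda>x. x \<in> {..<0}) (nhds t)"
    using less by (intro eventually_nhds_in_open) auto
  then have ev: "eventually (\<lambda>x. abs_powr a x = (- x) powr a) (nhds t)"
    by eventually_elim (simp add: abs_powr_def)
  have "((\<lambda>x. (- x) powr a) has_real_derivative a * (- t) powr (a - 1) * (- 1)) (at t)"
    using less by (auto intro!: derivative_eq_intros)
  then show ?thesis
    using less by (subst DERIV_cong_ev[OF refl ev refl]) (simp add: signed_powr_def)
next
  case equal
  have "((\<lambda>h. \<bar>h\<bar> powr (a - 1)) \<longlongrightarrow> 0) (at 0)"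
    using assms by (intro tendsto_zero_powrI tendsto_eq_intros) auto
  then have "((\<lambda>h. (abs_powr a (0 + h) - abs_powr a 0) / h) \<longlongrightarrow> 0) (at 0)"
    by (rule tendsto_rabs_zero_cancel[OF Lim_transform_eventually])
       (auto simp: eventually_at_filter abs_powr_def abs_divide powr_diff)
  then show ?thesis
    using equal by (simp add: DERIV_def signed_powr_def)
next
  case greater
  have "eventually (\<lambda>x. x \<in> {0<..}) (nhds t)"
    using greater by (intro eventually_nhds_in_open) auto
  then have ev: "eventually (\<lambda>x. abs_powr a x = x powr a) (nhds t)"
    by eventually_elim (simp add: abs_powr_def)
  have "((\<lambda>x. x powr a) has_real_derivative a * t powr (a - 1)) (at t)"
    using greater by (rule has_real_derivative_powr)
  then show ?thesis
    using greater by (subst DERIV_cong_ev[OF refl ev refl]) (simp add: signed_powr_def)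
qed

lemma powr_increment_ge:
  fixes b u v M :: real
  assumes "0 < b" "b < 1" "0 < u" "u < v" "v \<le> M"
  shows "b * M powr (b - 1) * (v - u) \<le> v powr b - u powr b"
proof -
  have "\<And>x. u \<le> x \<Longrightarrow> x \<le> v \<Longrightarrow> ((\<lambda>x. x powr b) has_real_derivative b * x powr (b - 1)) (at x)"
    using assms by (auto intro!: has_real_derivative_powr)
  from MVT2[OF \<open>u < v\<close> this] obtain z where z: "u < z" "z < v"
    and eq: "v powr b - u powr b = (v - u) * (b * z powr (b - 1))" by blast
  have "M powr (b - 1) \<le> z powr (b - 1)"
    using assms z by (intro powr_mono2') auto
  then show ?thesis
    using assms z unfolding eq by (simp add: mult_left_mono mult_right_mono mult.commute)
qed

lemma powr_ge_linear:
  fixes b x M :: real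
  assumes "b \<le> 1" "0 \<le> x" "x \<le> M"
  shows "M powr (b - 1) * x \<le> x powr b"
proof (cases "x = 0")
  case False
  then have "M powr (b - 1) \<le> x powr (b - 1)"
    using assms by (intro powr_mono2') auto
  then show ?thesis
    using assms False by (simp add: powr_diff mult_right_mono field_simps)
qed simp

lemma signed_powr_increment_ge:
  assumes "0 < b" "b < 1" "x < y" "\<bar>x\<bar> \<le> M" "\<bar>y\<bar> \<le> M"
  shows "b * M powr (b - 1) * (y - x) \<le> signed_powr b y - signed_powr b x"
proof -
  consider "0 < x" | "y < 0" | "x \<le> 0" "0 \<le> y" by linarith
  then show ?thesis
  proof cases
    case 1
    then show ?thesis
      using powr_increment_ge[of b x y M] assms by (simp add: signed_powr_def)
  next
    case 2
    then show ?thesis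
      using powr_increment_ge[of b "- y" "- x" M] assms by (simp add: signed_powr_def)
  next
    case 3
    have "M powr (b - 1) * y \<le> y powr b" "M powr (b - 1) * (- x) \<le> (- x) powr b"
      using 3 assms by (intro powr_ge_linear; simp)+
    moreover have "b * (M powr (b - 1) * (y - x)) \<le> M powr (b - 1) * (y - x)"
      using 3 assms by (intro mult_left_le_one_le) auto
    moreover have "signed_powr b y - signed_powr b x = y powr b + (- x) powr b"
      using 3 by (auto simp: signed_powr_def sgn_if)
    ultimately show ?thesis
      by (simp add: algebra_simps)
  qed
qed

lemma signed_powr_mono:
  assumes "0 < b" "b < 1" "x \<le> y"
  shows "signed_powr b x \<le> signed_powr b y"
proof (cases "x = y")
  case False
  have "0 \<le> b * (max \<bar>x\<bar> \<bar>y\<bar>) powr (b - 1) * (y - x)"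
    using assms by simp
  also have "\<dots> \<le> signed_powr b y - signed_powr b x"
    using assms False by (intro signed_powr_increment_ge) auto
  finally show ?thesis by simp
qed simp

text \<open>Only one endpoint is bounded: if \<open>x < -2 * N\<close>, monotonicity reduces to the pair \<open>-2 * N < -N\<close>.\<close>

lemma signed_powr_gap_ge:
  assumes "0 < b" "b < 1" "x < y" "\<bar>x\<bar> \<le> N \<or> \<bar>y\<bar> \<le> N" "U \<le> y - x" "0 < U" "U \<le> N"
  shows "b * (2 * N) powr (b - 1) * U \<le> signed_powr b y - signed_powr b x"
proof -
  have gap: "b * (2 * N) powr (b - 1) * U \<le> signed_powr b y - signed_powr b x"
    if "x < y" "\<bar>y\<bar> \<le> N" "U \<le> y - x" for x y
  proof (cases "- 2 * N \<le> x")
    case True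
    have "b * (2 * N) powr (b - 1) * U \<le> b * (2 * N) powr (b - 1) * (y - x)"
      using assms that by (intro mult_left_mono) auto
    also have "\<dots> \<le> signed_powr b y - signed_powr b x"
      using assms that True by (intro signed_powr_increment_ge) auto
    finally show ?thesis .
  next
    case False
    have "b * (2 * N) powr (b - 1) * U \<le> b * (2 * N) powr (b - 1) * (- N - (- 2 * N))"
      using assms by (intro mult_left_mono) auto
    also have "\<dots> \<le> signed_powr b (- N) - signed_powr b (- 2 * N)"
      using assms by (intro signed_powr_increment_ge) auto
    also have "\<dots> \<le> signed_powr b y - signed_powr b x"
      using assms that False signed_powr_mono[of b "- N" y] signed_powr_mono[of b x "- 2 * N"]
      by linarith
    finally show ?thesis .
  qed
  show ?thesis
    using assms(4)
  proof
    assume "\<bar>x\<bar> \<le> N"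
    then show ?thesis
      using gap[of "- y" "- x"] assms by simp
  qed (use gap assms in blast)
qed

lemma increment_ge_of_deriv_ge:
  fixes f f' :: "real \<Rightarrow> real"
  assumes "s \<le> t"
    and "\<And>x. s \<le> x \<Longrightarrow> x \<le> t \<Longrightarrow> (f has_real_derivative f' x) (at x)"
    and "\<And>x. s \<le> x \<Longrightarrow> x \<le> t \<Longrightarrow> \<kappa> \<le> f' x"
  shows "\<kappa> * (t - s) \<le> f t - f s"
proof (cases "s = t")
  case False
  then obtain z where z: "s < z" "z < t" and eq: "f t - f s = (t - s) * f' z"
    using MVT2[of s t f f'] assms by force
  show ?thesis
    unfolding eq using assms(1) assms(3)[of z] z by (simp add: mult.commute mult_left_mono)
qed simp

lemma abs_powr_difference_increment_ge:
  fixes d L s t :: real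
  assumes "1 < \<alpha>" "\<alpha> < 2" "d \<noteq> 0" "\<bar>s\<bar> \<le> L" "\<bar>t\<bar> \<le> L" "s \<le> t"
  shows "\<alpha> * (\<alpha> - 1) * (L + \<bar>d\<bar>) powr (\<alpha> - 2) * \<bar>d\<bar> * (t - s)
    \<le> sgn d * (abs_powr \<alpha> (t + d) - abs_powr \<alpha> t) - sgn d * (abs_powr \<alpha> (s + d) - abs_powr \<alpha> s)"
proof (rule increment_ge_of_deriv_ge)
  fix x assume x: "s \<le> x" "x \<le> t"
  show "((\<lambda>t. sgn d * (abs_powr \<alpha> (t + d) - abs_powr \<alpha> t)) has_real_derivative
      sgn d * (\<alpha> * signed_powr (\<alpha> - 1) (x + d) - \<alpha> * signed_powr (\<alpha> - 1) x)) (at x)"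
    using assms by (auto intro!: derivative_eq_intros DERIV_chain2[OF has_real_derivative_abs_powr]
        has_real_derivative_abs_powr)
  have "(\<alpha> - 1) * (L + \<bar>d\<bar>) powr (\<alpha> - 2) * \<bar>d\<bar>
      \<le> sgn d * (signed_powr (\<alpha> - 1) (x + d) - signed_powr (\<alpha> - 1) x)"
    using signed_powr_increment_ge[of "\<alpha> - 1" x "x + d" "L + \<bar>d\<bar>"]
      signed_powr_increment_ge[of "\<alpha> - 1" "x + d" x "L + \<bar>d\<bar>"] assms x
    by (cases "0 < d") (auto simp: abs_le_iff)
  from mult_left_mono[OF this, of \<alpha>]
  show "\<alpha> * (\<alpha> - 1) * (L + \<bar>d\<bar>) powr (\<alpha> - 2) * \<bar>d\<bar>
      \<le> sgn d * (\<alpha> * signed_powr (\<alpha> - 1) (x + d) - \<alpha> * signed_powr (\<alpha> - 1) x)"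
    using assms by (simp add: algebra_simps)
qed (fact assms)

lemma abs_powr_sum_increment_ge:
  fixes s N U r t \<sigma> :: real
  assumes "1 < \<alpha>" "\<alpha> < 2" "\<sigma> = 1 \<or> \<sigma> = -1" "0 < U" "U \<le> N"
    and "\<bar>r\<bar> \<le> N" "U \<le> \<sigma> * (2 * r - s)" "\<bar>t\<bar> \<le> N" "U \<le> \<sigma> * (2 * t - s)" "r \<le> t"
  shows "\<alpha> * (\<alpha> - 1) * (2 * N) powr (\<alpha> - 2) * U * (t - r)
    \<le> \<sigma> * (abs_powr \<alpha> t + abs_powr \<alpha> (s - t)) - \<sigma> * (abs_powr \<alpha> r + abs_powr \<alpha> (s - r))"
proof (rule increment_ge_of_deriv_ge)
  fix x assume x: "r \<le> x" "x \<le> t"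
  show "((\<lambda>t. \<sigma> * (abs_powr \<alpha> t + abs_powr \<alpha> (s - t))) has_real_derivative
      \<sigma> * (\<alpha> * signed_powr (\<alpha> - 1) x - \<alpha> * signed_powr (\<alpha> - 1) (s - x))) (at x)"
    using assms by (auto intro!: derivative_eq_intros DERIV_chain2[OF has_real_derivative_abs_powr]
        has_real_derivative_abs_powr)
  have "\<bar>x\<bar> \<le> N" "U \<le> \<sigma> * (2 * x - s)"
    using assms x by auto
  then have "(\<alpha> - 1) * (2 * N) powr (\<alpha> - 2) * U
      \<le> \<sigma> * (signed_powr (\<alpha> - 1) x - signed_powr (\<alpha> - 1) (s - x))"
    using signed_powr_gap_ge[of "\<alpha> - 1" "s - x" x N U] signed_powr_gap_ge[of "\<alpha> - 1" x "s - x" N U] assms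
    by auto
  from mult_left_mono[OF this, of \<alpha>]
  show "\<alpha> * (\<alpha> - 1) * (2 * N) powr (\<alpha> - 2) * U
      \<le> \<sigma> * (\<alpha> * signed_powr (\<alpha> - 1) x - \<alpha> * signed_powr (\<alpha> - 1) (s - x))"
    using assms by (simp add: algebra_simps)
qed (fact assms)

section \<open>Integer points in level sets\<close>

lemma card_int_level_set_le:
  fixes f :: "real \<Rightarrow> real" and P :: "real \<Rightarrow> bool"
  assumes "0 < \<kappa>" "0 \<le> w" "\<And>t. P t \<Longrightarrow> \<bar>t\<bar> \<le> B"
    and "\<And>s t. P s \<Longrightarrow> P t \<Longrightarrow> s \<le> t \<Longrightarrow> \<kappa> * (t - s) \<le> f t - f s"
  shows "real (card {x::int. P x \<and> \<bar>f x - c\<bar> \<le> w}) \<le> 2 * w / \<kappa> + 1"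
proof -
  define X where "X = {x::int. P x \<and> \<bar>f x - c\<bar> \<le> w}"
  have "\<bar>x\<bar> \<le> \<lfloor>B\<rfloor>" if "x \<in> X" for x
    using assms(3)[of x] that by (simp add: X_def le_floor_iff)
  then have "X \<subseteq> {- \<lfloor>B\<rfloor>..\<lfloor>B\<rfloor>}"
    by (force simp: abs_le_iff)
  then have fin: "finite X"
    using finite_subset by blast
  show ?thesis
  proof (cases "X = {}")
    case False
    define a b where "a = Min X" and "b = Max X"
    have aX: "a \<in> X" and bX: "b \<in> X" and sub: "X \<subseteq> {a..b}"
      using fin False by (auto simp: a_def b_def)
    have "\<kappa> * (b - a) \<le> f b - f a"
      using aX bX sub assms(4)[of a b] by (auto simp: X_def)
    also have "\<dots> \<le> 2 * w"
      using aX bX by (auto simp: X_def)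
    finally have "real_of_int (b - a) \<le> 2 * w / \<kappa>"
      using assms(1) by (simp add: field_simps)
    moreover have "card X \<le> card {a..b}"
      using sub by (intro card_mono) auto
    ultimately show ?thesis
      unfolding X_def[symmetric] using aX bX sub by auto
  qed (use assms in \<open>simp add: X_def[symmetric]\<close>)
qed

definition level_const :: "real \<Rightarrow> real \<Rightarrow> real" where
  "level_const \<alpha> C0 = 2 * C0 / (\<alpha> * (\<alpha> - 1))"

lemma level_const_nonneg: "1 < \<alpha> \<Longrightarrow> 0 \<le> C0 \<Longrightarrow> 0 \<le> level_const \<alpha> C0"
  by (simp add: level_const_def)

lemma level_const_divide:
  assumes "1 < \<alpha>" "0 < X"
  shows "2 * C0 / (\<alpha> * (\<alpha> - 1) * X powr (\<alpha> - 2) * U) = level_const \<alpha> C0 * X powr (2 - \<alpha>) / U"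
proof -
  have "X powr (2 - \<alpha>) * X powr (\<alpha> - 2) = 1"
    using assms by (simp flip: powr_add)
  then show ?thesis
    using assms by (simp add: level_const_def divide_simps)
qed

lemma powr_add_le_max:
  fixes u v p :: real
  assumes "0 \<le> u" "0 \<le> v" "0 \<le> p" "p \<le> 1"
  shows "(u + v) powr p \<le> 2 * max u v powr p"
proof -
  have "(u + v) powr p \<le> (2 * max u v) powr p"
    using assms by (intro powr_mono2) auto
  also have "\<dots> = 2 powr p * max u v powr p"
    using assms by (simp add: powr_mult)
  also have "\<dots> \<le> 2 * max u v powr p"
    using assms powr_mono[of p 1 2] by (intro mult_right_mono) auto
  finally show ?thesis .
qed

lemma card_difference_level_set_le:
  fixes d L :: int
  assumes "1 < \<alpha>" "\<alpha> < 2" "0 \<le> C0" "d \<noteq> 0" "0 \<le> L"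
  shows "real (card {y::int. \<bar>y\<bar> \<le> L \<and> \<bar>abs_powr \<alpha> (y + d) - abs_powr \<alpha> y - c\<bar> \<le> C0})
    \<le> 1 + 2 * level_const \<alpha> C0 + 2 * level_const \<alpha> C0 * real_of_int L powr (2 - \<alpha>) / \<bar>d\<bar>"
proof -
  define R where "R = real_of_int L + \<bar>d\<bar>"
  define f where "f t = sgn (real_of_int d) * (abs_powr \<alpha> (t + d) - abs_powr \<alpha> t)" for t :: real
  have R: "0 < R" "1 \<le> \<bar>real_of_int d\<bar>"
    using assms by (auto simp: R_def)
  have "{y::int. \<bar>y\<bar> \<le> L \<and> \<bar>abs_powr \<alpha> (y + d) - abs_powr \<alpha> y - c\<bar> \<le> C0}
      = {y::int. \<bar>real_of_int y\<bar> \<le> L \<and> \<bar>f y - sgn (real_of_int d) * c\<bar> \<le> C0}"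
    using assms by (auto simp: f_def sgn_if abs_le_iff algebra_simps)
  also have "real (card \<dots>) \<le> 2 * C0 / (\<alpha> * (\<alpha> - 1) * R powr (\<alpha> - 2) * \<bar>d\<bar>) + 1"
    using abs_powr_difference_increment_ge[where d = "real_of_int d" and L = "real_of_int L"] assms R
    by (intro card_int_level_set_le) (auto simp: f_def R_def)
  also have "2 * C0 / (\<alpha> * (\<alpha> - 1) * R powr (\<alpha> - 2) * \<bar>d\<bar>) = level_const \<alpha> C0 * R powr (2 - \<alpha>) / \<bar>d\<bar>"
    using assms R by (intro level_const_divide) auto
  also have "\<dots> \<le> level_const \<alpha> C0 * (2 * L powr (2 - \<alpha>) + 2 * \<bar>d\<bar>) / \<bar>d\<bar>"
  proof -
    have "R powr (2 - \<alpha>) \<le> 2 * max (real_of_int L) \<bar>d\<bar> powr (2 - \<alpha>)"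
      unfolding R_def using assms by (intro powr_add_le_max) auto
    also have "\<dots> \<le> 2 * L powr (2 - \<alpha>) + 2 * \<bar>d\<bar>"
      using R assms powr_mono[of "2 - \<alpha>" 1 "\<bar>d\<bar>"] by (auto simp: max_def add_increasing)
    finally show ?thesis
      using R assms level_const_nonneg by (intro divide_right_mono mult_left_mono) auto
  qed
  finally show ?thesis
    using R by (simp add: field_simps)
qed

lemma card_sum_level_set_le:
  fixes s N U :: int
  assumes "1 < \<alpha>" "\<alpha> < 2" "0 \<le> C0" "0 < U" "U \<le> N"
  shows "real (card {y::int. \<bar>y\<bar> \<le> N \<and> U \<le> \<bar>2 * y - s\<bar> \<and>
      \<bar>abs_powr \<alpha> y + abs_powr \<alpha> (s - y) - c\<bar> \<le> C0})
    \<le> 4 * level_const \<alpha> C0 * real_of_int N powr (2 - \<alpha>) / U + 2"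
proof -
  define \<kappa> where "\<kappa> = \<alpha> * (\<alpha> - 1) * (2 * real_of_int N) powr (\<alpha> - 2) * U"
  define Q where "Q t = abs_powr \<alpha> t + abs_powr \<alpha> (s - t)" for t :: real
  define A where "A \<sigma> = {y::int. \<bar>y\<bar> \<le> N \<and> U \<le> \<sigma> * (2 * y - s) \<and> \<bar>Q y - c\<bar> \<le> C0}" for \<sigma> :: real
  have half: "real (card (A \<sigma>)) \<le> 2 * C0 / \<kappa> + 1" if \<sigma>: "\<sigma> = 1 \<or> \<sigma> = -1" for \<sigma>
  proof -
    have "\<bar>\<sigma> * Q y - \<sigma> * c\<bar> = \<bar>Q y - c\<bar>" for y
      using \<sigma> by (auto simp: abs_minus_commute)
    then have "A \<sigma> = {y::int. (\<bar>real_of_int y\<bar> \<le> N \<and> U \<le> \<sigma> * (2 * real_of_int y - s))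
        \<and> \<bar>\<sigma> * Q y - \<sigma> * c\<bar> \<le> C0}"
      by (auto simp: A_def)
    also have "real (card \<dots>) \<le> 2 * C0 / \<kappa> + 1"
      using abs_powr_sum_increment_ge[where \<sigma> = \<sigma> and U = U and N = N] assms \<sigma>
      by (intro card_int_level_set_le[where B = N and f = "\<lambda>t. \<sigma> * Q t"
            and P = "\<lambda>t. \<bar>t\<bar> \<le> N \<and> U \<le> \<sigma> * (2 * t - s)"])
         (auto simp: Q_def \<kappa>_def)
    finally show ?thesis .
  qed
  have "{y::int. \<bar>y\<bar> \<le> N \<and> U \<le> \<bar>2 * y - s\<bar> \<and> \<bar>abs_powr \<alpha> y + abs_powr \<alpha> (s - y) - c\<bar> \<le> C0}
      = A 1 \<union> A (- 1)"
    by (auto simp: A_def Q_def abs_if)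
  then have "real (card {y::int. \<bar>y\<bar> \<le> N \<and> U \<le> \<bar>2 * y - s\<bar> \<and>
      \<bar>abs_powr \<alpha> y + abs_powr \<alpha> (s - y) - c\<bar> \<le> C0}) \<le> real (card (A 1)) + real (card (A (- 1)))"
    using card_Un_le[of "A 1" "A (- 1)"] by simp
  also have "\<dots> \<le> 2 * (2 * C0 / \<kappa> + 1)"
    using half[of 1] half[of "- 1"] by simp
  also have "2 * C0 / \<kappa> = level_const \<alpha> C0 * (N + N) powr (2 - \<alpha>) / U"
    unfolding \<kappa>_def using assms level_const_divide[of \<alpha> "2 * N"] by simp
  also have "\<dots> \<le> level_const \<alpha> C0 * (2 * N powr (2 - \<alpha>)) / U"
    using assms powr_add_le_max[of N N "2 - \<alpha>"] level_const_nonneg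
    by (intro divide_right_mono mult_left_mono) auto
  finally show ?thesis
    by (simp add: field_simps)
qed

section \<open>Summing over the difference\<close>

lemma harm_le_one_plus_ln: "1 \<le> n \<Longrightarrow> (harm n :: real) \<le> 1 + ln (real n)"
  using decseq_harm_diff_ln[unfolded decseq_def, rule_format, of 0 "n - 1"]
  by (simp add: harm_expand)

lemma sum_inverse_le_harm:
  "finite A \<Longrightarrow> 0 \<notin> A \<Longrightarrow> card A \<le> n \<Longrightarrow> (\<Sum>j\<in>A. 1 / real j) \<le> harm n"
proof (induction n arbitrary: A)
  case 0
  then show ?case by (simp add: harm_expand)
next
  case (Suc n)
  show ?case
  proof (cases "card A \<le> n")
    case True
    then have "(\<Sum>j\<in>A. 1 / real j) \<le> harm n"
      using Suc by blast
    also have "\<dots> \<le> harm (Suc n)"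
      by (rule harm_mono) simp
    finally show ?thesis .
  next
    case False
    then have card: "card A = Suc n"
      using Suc.prems by simp
    define m where "m = Max A"
    have mA: "m \<in> A"
      unfolding m_def using Suc.prems card by (intro Max_in) auto
    have "A \<subseteq> {1..m}"
      using Suc.prems by (auto simp: m_def Suc_le_eq intro: gr0I)
    then have "Suc n \<le> m"
      using card card_mono[of "{1..m}" A] by simp
    then have "1 / real m \<le> 1 / real (Suc n)"
      by (simp add: frac_le)
    moreover have "(\<Sum>j\<in>A - {m}. 1 / real j) \<le> harm n"
      using Suc.prems card mA by (intro Suc.IH) auto
    ultimately show ?thesis
      using Suc.prems mA by (simp add: sum.remove harm_Suc inverse_eq_divide)
  qed
qed

lemma sum_inverse_distance_le_harm:
  fixes X :: "int set"
  assumes "finite X" "a \<notin> X" "card X \<le> n"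
  shows "(\<Sum>x\<in>X. 1 / real_of_int \<bar>x - a\<bar>) \<le> 2 * harm n"
proof -
  define g where "g x = nat \<bar>x - a\<bar>" for x
  have side: "(\<Sum>x\<in>Y. 1 / real_of_int \<bar>x - a\<bar>) \<le> harm n" if "Y \<subseteq> X" "inj_on g Y" for Y
  proof -
    have fin: "finite Y"
      using that assms finite_subset by blast
    have "(\<Sum>j\<in>g ` Y. 1 / real j) = (\<Sum>x\<in>Y. 1 / real (g x))"
      by (simp add: sum.reindex[OF that(2)])
    then have "(\<Sum>x\<in>Y. 1 / real_of_int \<bar>x - a\<bar>) = (\<Sum>j\<in>g ` Y. 1 / real j)"
      by (simp add: g_def)
    also have "\<dots> \<le> harm n"
    proof (rule sum_inverse_le_harm)
      show "card (g ` Y) \<le> n"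
        using card_image_le[OF fin, of g] card_mono[OF assms(1) that(1)] assms by linarith
    qed (use fin that assms in \<open>auto simp: g_def\<close>)
    finally show ?thesis .
  qed
  define Xl Xr where "Xl = {x\<in>X. x < a}" and "Xr = {x\<in>X. a < x}"
  have X: "X = Xr \<union> Xl"
    using assms(2) by (auto simp: Xl_def Xr_def) (metis linorder_neqE)
  have "(\<Sum>x\<in>X. 1 / real_of_int \<bar>x - a\<bar>)
      = (\<Sum>x\<in>Xr. 1 / real_of_int \<bar>x - a\<bar>) + (\<Sum>x\<in>Xl. 1 / real_of_int \<bar>x - a\<bar>)"
    using assms(1) by (subst X, intro sum.union_disjoint) (auto simp: Xl_def Xr_def)
  also have "\<dots> \<le> harm n + harm n"
    by (intro add_mono side) (auto simp: inj_on_def g_def Xl_def Xr_def)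
  finally show ?thesis by simp
qed

lemma one_le_ln_two_plus: "1 \<le> n \<Longrightarrow> 1 \<le> ln (2 + real n)"
  using ln_ge_iff[of "2 + real n" 1] exp_le by auto

lemma one_plus_ln_le:
  assumes "1 \<le> M"
  shows "1 + ln (5 * real M) \<le> 4 * ln (2 + real M)"
proof -
  have "ln (5 * real M) \<le> 2 * ln 3 + ln (real M)"
    using assms ln_realpow[of 3 2] ln_le_cancel_iff[of 5 9] by (simp add: ln_mult)
  moreover have "ln 3 \<le> ln (2 + real M)" "ln (real M) \<le> ln (2 + real M)"
    using assms by auto
  ultimately show ?thesis
    using one_le_ln_two_plus[OF assms] by linarith
qed

lemma card_difference_pairs_le:
  fixes X :: "int set" and L M :: nat and D :: "int \<Rightarrow> int" and c :: "int \<Rightarrow> real"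
  assumes "1 < \<alpha>" "\<alpha> < 2" "0 \<le> C0" "1 \<le> M"
    and "finite X" "a \<notin> X" "card X \<le> 5 * M" "\<And>x. \<bar>D x\<bar> = \<bar>x - a\<bar>"
  shows "real (card (SIGMA x:X. {y::int. \<bar>y\<bar> \<le> L \<and>
      \<bar>abs_powr \<alpha> (y + D x) - abs_powr \<alpha> y - c x\<bar> \<le> C0}))
    \<le> (5 + 16 * level_const \<alpha> C0) * (real L powr (2 - \<alpha>) * ln (2 + real M) + M)"
proof -
  define K where "K = level_const \<alpha> C0"
  define Y where "Y x = {y::int. \<bar>y\<bar> \<le> L \<and> \<bar>abs_powr \<alpha> (y + D x) - abs_powr \<alpha> y - c x\<bar> \<le> C0}" for x
  have K: "0 \<le> K"
    using assms by (simp add: K_def level_const_nonneg)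
  have fibre: "real (card (Y x)) \<le> (1 + 2 * K) + 2 * K * real L powr (2 - \<alpha>) * (1 / \<bar>x - a\<bar>)"
    if "x \<in> X" for x
  proof -
    have "\<bar>real_of_int (D x)\<bar> = \<bar>real_of_int x - real_of_int a\<bar>" "D x \<noteq> 0"
      using assms(6) assms(8)[of x] that by (metis of_int_abs of_int_diff, auto)
    then show ?thesis
      using card_difference_level_set_le[of \<alpha> C0 "D x" "int L" "c x"] assms that
      by (auto simp: Y_def K_def)
  qed
  have "finite (Y x)" for x
    by (rule finite_subset[of _ "{- int L..int L}"]) (auto simp: Y_def)
  then have "real (card (SIGMA x:X. Y x)) = (\<Sum>x\<in>X. real (card (Y x)))"
    using assms by (simp add: card_SigmaI)
  also have "\<dots> \<le> (\<Sum>x\<in>X. (1 + 2 * K) + 2 * K * real L powr (2 - \<alpha>) * (1 / \<bar>x - a\<bar>))"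
    using fibre by (intro sum_mono) auto
  also have "\<dots> = card X * (1 + 2 * K) + 2 * K * real L powr (2 - \<alpha>) * (\<Sum>x\<in>X. 1 / \<bar>x - a\<bar>)"
    by (simp add: sum.distrib sum_distrib_left)
  also have "\<dots> \<le> 5 * M * (1 + 2 * K) + 2 * K * real L powr (2 - \<alpha>) * (2 * harm (5 * M))"
    using assms K sum_inverse_distance_le_harm[OF assms(5,6,7)]
    by (intro add_mono mult_right_mono mult_left_mono) auto
  also have "\<dots> \<le> 5 * M * (1 + 2 * K) + 2 * K * real L powr (2 - \<alpha>) * (2 * (4 * ln (2 + real M)))"
    using assms K harm_le_one_plus_ln[of "5 * M"] one_plus_ln_le[of M]
    by (intro add_mono mult_left_mono) auto
  also have "\<dots> \<le> (5 + 16 * K) * (real L powr (2 - \<alpha>) * ln (2 + real M) + M)"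
    using K assms by (simp add: algebra_simps)
  finally show ?thesis
    by (simp add: Y_def K_def)
qed

lemma card_le_difference_pairs:
  fixes X :: "int set" and L M :: nat and D :: "int \<Rightarrow> int" and c :: "int \<Rightarrow> real"
  assumes "1 < \<alpha>" "\<alpha> < 2" "0 \<le> C0" "1 \<le> M"
    and "finite X" "a \<notin> X" "card X \<le> 5 * M" "\<And>x. \<bar>D x\<bar> = \<bar>x - a\<bar>"
    and "inj_on f A"
    and "f ` A \<subseteq> (SIGMA x:X. {y::int. \<bar>y\<bar> \<le> L \<and>
      \<bar>abs_powr \<alpha> (y + D x) - abs_powr \<alpha> y - c x\<bar> \<le> C0})"
  shows "real (card A) \<le> (5 + 16 * level_const \<alpha> C0) * (real L powr (2 - \<alpha>) * ln (2 + real M) + M)"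
proof -
  have "finite (SIGMA x:X. {y::int. \<bar>y\<bar> \<le> L \<and> \<bar>abs_powr \<alpha> (y + D x) - abs_powr \<alpha> y - c x\<bar> \<le> C0})"
    using assms(5) by (rule finite_SigmaI) (rule finite_subset[of _ "{- int L..int L}"], auto)
  then have "card A \<le> card (SIGMA x:X. {y::int. \<bar>y\<bar> \<le> L \<and>
      \<bar>abs_powr \<alpha> (y + D x) - abs_powr \<alpha> y - c x\<bar> \<le> C0})"
    using assms(9,10) by (intro card_inj_on_le)
  then show ?thesis
    using card_difference_pairs_le[OF assms(1-8), of L c] by linarith
qed

section \<open>Fibres of the resonance set\<close>

lemma mem_Sres:
  "(k, k1, k2, k3) \<in> Sres \<alpha> C0 m N N1 N2 N3 \<longleftrightarrow>
    k = k1 - k2 + k3 \<and> k2 \<noteq> k1 \<and> k2 \<noteq> k3 \<and>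
    \<bar>abs_powr \<alpha> k1 - abs_powr \<alpha> k2 + abs_powr \<alpha> k3 - abs_powr \<alpha> k - m\<bar> \<le> C0 \<and>
    \<bar>k\<bar> \<le> int N \<and> \<bar>k1\<bar> \<le> int N1 \<and> \<bar>k2\<bar> \<le> int N2 \<and> \<bar>k3\<bar> \<le> int N3"
  by (simp add: Sres_def abs_powr_def)

lemma mem_Sres_swap:
  "(k, k1, k2, k3) \<in> Sres \<alpha> C0 m N N1 N2 N3 \<longleftrightarrow> (k, k3, k2, k1) \<in> Sres \<alpha> C0 m N N3 N2 N1"
  by (auto simp: mem_Sres algebra_simps)

text \<open>Orientations of the frequency relation that let the simplifier eliminate \<open>k2\<close>, resp. \<open>k3\<close>.\<close>

lemma resonance_eq_iff:
  fixes k k1 k2 k3 :: int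
  shows resonance_eq_iff_k2: "k = k1 - k2 + k3 \<longleftrightarrow> k2 = k1 + k3 - k"
    and resonance_eq_iff_k3: "k = k1 - k2 + k3 \<longleftrightarrow> k3 = k - k1 + k2"
  by auto

lemma card_interval_minus_le: "card ({- int n..int n} - {a}) \<le> 2 * n + 1"
  using card_Diff1_le[of "{- int n..int n}" a] by simp

lemma card_eq_by_involution:
  assumes "\<And>x. g (g x) = x" "\<And>x. x \<in> A \<longleftrightarrow> g x \<in> B"
  shows "card A = card B"
proof (rule bij_betw_same_card, rule bij_betw_byWitness[where f' = g])
  show "g ` B \<subseteq> A"
    using assms by (metis image_subsetI)
qed (use assms in auto)

lemma card_fibre_k_le_via_k3:
  assumes "1 < \<alpha>" "\<alpha> < 2" "0 \<le> C0" "1 \<le> N1"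
  shows "real (card {(k1, k2, k3). (k, k1, k2, k3) \<in> Sres \<alpha> C0 m N N1 N2 N3})
    \<le> (5 + 16 * level_const \<alpha> C0) * (real N3 powr (2 - \<alpha>) * ln (2 + real N1) + N1)"
proof (rule card_le_difference_pairs[where f = "\<lambda>(k1, k2, k3). (k1, k3)" and X = "{- int N1..N1} - {k}"
      and a = k and D = "\<lambda>x. x - k" and c = "\<lambda>x. abs_powr \<alpha> x - abs_powr \<alpha> k - m"])
  show "inj_on (\<lambda>(k1, k2, k3). (k1, k3)) {(k1, k2, k3). (k, k1, k2, k3) \<in> Sres \<alpha> C0 m N N1 N2 N3}"
    by (auto simp: inj_on_def mem_Sres)
  show "card ({- int N1..N1} - {k}) \<le> 5 * N1"
    using assms card_interval_minus_le[of N1 k] by linarith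
qed (use assms in \<open>auto simp: mem_Sres resonance_eq_iff_k2, auto simp: abs_le_iff algebra_simps\<close>)

lemma card_fibre_k_le_via_k2:
  assumes "1 < \<alpha>" "\<alpha> < 2" "0 \<le> C0" "1 \<le> N1"
  shows "real (card {(k1, k2, k3). (k, k1, k2, k3) \<in> Sres \<alpha> C0 m N N1 N2 N3})
    \<le> (5 + 16 * level_const \<alpha> C0) * (real N2 powr (2 - \<alpha>) * ln (2 + real N1) + N1)"
proof (rule card_le_difference_pairs[where f = "\<lambda>(k1, k2, k3). (k1, k2)" and X = "{- int N1..N1} - {k}"
      and a = k and D = "\<lambda>x. k - x" and c = "\<lambda>x. abs_powr \<alpha> k + m - abs_powr \<alpha> x"])
  show "inj_on (\<lambda>(k1, k2, k3). (k1, k2)) {(k1, k2, k3). (k, k1, k2, k3) \<in> Sres \<alpha> C0 m N N1 N2 N3}"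
    by (auto simp: inj_on_def mem_Sres)
  show "card ({- int N1..N1} - {k}) \<le> 5 * N1"
    using assms card_interval_minus_le[of N1 k] by linarith
  show "\<bar>k - x\<bar> = \<bar>x - k\<bar>" for x
    by (rule abs_minus_commute)
qed (use assms in \<open>auto simp: mem_Sres resonance_eq_iff_k3\<close>)

lemma card_fibre_k1_le_via_k2:
  assumes "1 < \<alpha>" "\<alpha> < 2" "0 \<le> C0" "1 \<le> M" "finite X" "k1 \<notin> X" "card X \<le> 5 * M"
    and "B \<subseteq> {(k, k2, k3). (k, k1, k2, k3) \<in> Sres \<alpha> C0 m N N1 N2 N3 \<and> k2 \<in> X}"
  shows "real (card B) \<le> (5 + 16 * level_const \<alpha> C0) * (real N3 powr (2 - \<alpha>) * ln (2 + real M) + M)"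
proof (rule card_le_difference_pairs[where f = "\<lambda>(k, k2, k3). (k2, k3)" and X = X
      and a = k1 and D = "\<lambda>x. k1 - x" and c = "\<lambda>x. abs_powr \<alpha> k1 - abs_powr \<alpha> x - m"])
  show "inj_on (\<lambda>(k, k2, k3). (k2, k3)) B"
    by (rule inj_on_subset[OF _ assms(8)]) (auto simp: inj_on_def mem_Sres)
  show "(\<lambda>(k, k2, k3). (k2, k3)) ` B \<subseteq> (SIGMA x:X. {y. \<bar>y\<bar> \<le> int N3 \<and>
      \<bar>abs_powr \<alpha> (y + (k1 - x)) - abs_powr \<alpha> y - (abs_powr \<alpha> k1 - abs_powr \<alpha> x - m)\<bar> \<le> C0})"
  proof -
    have "(\<lambda>(k, k2, k3). (k2, k3)) ` {(k, k2, k3). (k, k1, k2, k3) \<in> Sres \<alpha> C0 m N N1 N2 N3 \<and> k2 \<in> X}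
      \<subseteq> (SIGMA x:X. {y. \<bar>y\<bar> \<le> int N3 \<and>
        \<bar>abs_powr \<alpha> (y + (k1 - x)) - abs_powr \<alpha> y - (abs_powr \<alpha> k1 - abs_powr \<alpha> x - m)\<bar> \<le> C0})"
      by (auto simp: mem_Sres, auto simp: abs_le_iff algebra_simps)
    then show ?thesis
      using assms(8) by blast
  qed
qed (use assms in auto)

lemma card_fibre_k2_le_via_k1:
  assumes "1 < \<alpha>" "\<alpha> < 2" "0 \<le> C0" "1 \<le> N1"
  shows "real (card {(k, k1, k3). (k, k1, k2, k3) \<in> Sres \<alpha> C0 m N N1 N2 N3})
    \<le> (5 + 16 * level_const \<alpha> C0) * (real N3 powr (2 - \<alpha>) * ln (2 + real N1) + N1)"
proof (rule card_le_difference_pairs[where f = "\<lambda>(k, k1, k3). (k1, k3)" and X = "{- int N1..N1} - {k2}"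
      and a = k2 and D = "\<lambda>x. x - k2" and c = "\<lambda>x. abs_powr \<alpha> x - abs_powr \<alpha> k2 - m"])
  show "inj_on (\<lambda>(k, k1, k3). (k1, k3)) {(k, k1, k3). (k, k1, k2, k3) \<in> Sres \<alpha> C0 m N N1 N2 N3}"
    by (auto simp: inj_on_def mem_Sres)
  show "card ({- int N1..N1} - {k2}) \<le> 5 * N1"
    using assms card_interval_minus_le[of N1 k2] by linarith
qed (use assms in \<open>auto simp: mem_Sres, auto simp: abs_le_iff algebra_simps\<close>)

lemma card_fibre_k1_le_of_less:
  assumes "1 < \<alpha>" "\<alpha> < 2" "0 \<le> C0" "N2 < N3"
  shows "real (card {(k, k2, k3). (k, k1, k2, k3) \<in> Sres \<alpha> C0 m N N1 N2 N3})
    \<le> (5 + 16 * level_const \<alpha> C0) * (real N2 powr (2 - \<alpha>) * ln (2 + real N3) + N3)"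
proof (rule card_le_difference_pairs[where f = "\<lambda>(k, k2, k3). (k3 - k2, k2)" and X = "{- int (N2 + N3)..N2 + N3} - {0}"
      and a = 0 and D = "\<lambda>x. x" and c = "\<lambda>x. m - abs_powr \<alpha> k1 + abs_powr \<alpha> (k1 + x)"])
  show "inj_on (\<lambda>(k, k2, k3). (k3 - k2, k2)) {(k, k2, k3). (k, k1, k2, k3) \<in> Sres \<alpha> C0 m N N1 N2 N3}"
    by (auto simp: inj_on_def mem_Sres)
  show "card ({- int (N2 + N3)..N2 + N3} - {0}) \<le> 5 * N3"
    using assms card_interval_minus_le[of "N2 + N3" 0] by simp
qed (use assms in \<open>auto simp: mem_Sres, auto simp: abs_le_iff algebra_simps\<close>)

lemma card_fibre_k1_off_diagonal_le:
  assumes "1 < \<alpha>" "\<alpha> < 2" "0 \<le> C0" "1 \<le> N3" "N3 \<le> N2"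
  shows "real (card {(k, k2, k3). (k, k1, k2, k3) \<in> Sres \<alpha> C0 m N N1 N2 N3 \<and> N3 \<le> \<bar>2 * k2 - k1 - k3\<bar>})
    \<le> 12 * level_const \<alpha> C0 * real N2 powr (2 - \<alpha>) + 6 * N3"
proof -
  define K where "K = level_const \<alpha> C0"
  define F where "F = {(k, k2, k3). (k, k1, k2, k3) \<in> Sres \<alpha> C0 m N N1 N2 N3 \<and> N3 \<le> \<bar>2 * k2 - k1 - k3\<bar>}"
  define W where "W z = {y::int. \<bar>y\<bar> \<le> N2 \<and> N3 \<le> \<bar>2 * y - (k1 + z)\<bar> \<and>
      \<bar>abs_powr \<alpha> y + abs_powr \<alpha> (k1 + z - y) - (abs_powr \<alpha> k1 + abs_powr \<alpha> z - m)\<bar> \<le> C0}" for z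
  have K: "0 \<le> K"
    using assms by (simp add: K_def level_const_nonneg)
  have W: "real (card (W z)) \<le> 4 * K * real N2 powr (2 - \<alpha>) / N3 + 2" for z
    using card_sum_level_set_le[of \<alpha> C0 "int N3" "int N2" "k1 + z"] assms by (simp add: W_def K_def)
  have finW: "finite (W z)" for z
    by (rule finite_subset[of _ "{- int N2..N2}"]) (auto simp: W_def)
  have "inj_on (\<lambda>(k, k2, k3). (k3, k2)) F"
    by (auto simp: inj_on_def F_def mem_Sres)
  moreover have "(\<lambda>(k, k2, k3). (k3, k2)) ` F \<subseteq> (SIGMA z:{- int N3..N3}. W z)"
    by (auto simp: F_def W_def mem_Sres, auto simp: abs_le_iff algebra_simps)
  ultimately have "card F \<le> card (SIGMA z:{- int N3..N3}. W z)"
    using finW by (intro card_inj_on_le) auto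
  also have "\<dots> = (\<Sum>z\<in>{- int N3..N3}. card (W z))"
    using finW by (simp add: card_SigmaI)
  finally have "real (card F) \<le> (\<Sum>z\<in>{- int N3..N3}. real (card (W z)))"
    by (metis of_nat_le_iff of_nat_sum)
  also have "\<dots> \<le> (2 * N3 + 1) * (4 * K * real N2 powr (2 - \<alpha>) / N3 + 2)"
    using sum_mono[of "{- int N3..N3}" "\<lambda>z. real (card (W z))", OF W] by (simp add: ac_simps)
  also have "\<dots> \<le> (3 * N3) * (4 * K * real N2 powr (2 - \<alpha>) / N3 + 2)"
    using assms K by (intro mult_right_mono) auto
  also have "\<dots> = 12 * K * real N2 powr (2 - \<alpha>) + 6 * N3"
    using assms by (simp add: field_simps)
  finally show ?thesis
    by (simp add: F_def K_def)
qed

lemma card_fibre_k1_near_diagonal_le: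
  assumes "1 < \<alpha>" "\<alpha> < 2" "0 \<le> C0" "1 \<le> N3"
  shows "real (card {(k, k2, k3). (k, k1, k2, k3) \<in> Sres \<alpha> C0 m N N1 N2 N3 \<and> \<bar>2 * k2 - k1 - k3\<bar> < N3})
    \<le> (5 + 16 * level_const \<alpha> C0) * (real N3 powr (2 - \<alpha>) * ln (2 + real N3) + N3)"
proof -
  define lo where "lo = (k1 - 2 * int N3) div 2"
  have "lo + 1 \<le> k2 \<and> k2 \<le> lo + 2 * int N3"
    if "\<bar>2 * k2 - k1 - k3\<bar> < N3" "\<bar>k3\<bar> \<le> N3" for k2 k3
    using that unfolding lo_def by (simp add: abs_less_iff abs_le_iff) presburger
  then have "{(k, k2, k3). (k, k1, k2, k3) \<in> Sres \<alpha> C0 m N N1 N2 N3 \<and> \<bar>2 * k2 - k1 - k3\<bar> < N3}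
      \<subseteq> {(k, k2, k3). (k, k1, k2, k3) \<in> Sres \<alpha> C0 m N N1 N2 N3 \<and> k2 \<in> {lo + 1..lo + 2 * N3} - {k1}}"
    by (auto simp: mem_Sres)
  then show ?thesis
    using card_Diff1_le[of "{lo + 1..lo + 2 * N3}" k1] assms
    by (intro card_fibre_k1_le_via_k2[where X = "{lo + 1..lo + 2 * N3} - {k1}"]) auto
qed

definition resonance_const :: "real \<Rightarrow> real \<Rightarrow> real" where
  "resonance_const \<alpha> C0 = 11 + 28 * level_const \<alpha> C0"

lemma le_resonance_const_mult:
  assumes "1 < \<alpha>" "0 \<le> C0" "0 \<le> Z" "r \<le> (5 + 16 * level_const \<alpha> C0) * Z"
  shows "r \<le> resonance_const \<alpha> C0 * Z"
proof -
  have "5 + 16 * level_const \<alpha> C0 \<le> resonance_const \<alpha> C0"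
    using level_const_nonneg[OF assms(1,2)] by (simp add: resonance_const_def)
  then show ?thesis
    using assms(3,4) mult_right_mono by fastforce
qed

lemma resonance_const_pos: "1 < \<alpha> \<Longrightarrow> 0 \<le> C0 \<Longrightarrow> 0 < resonance_const \<alpha> C0"
  using level_const_nonneg[of \<alpha> C0] by (simp add: resonance_const_def)

lemma card_fibre_k1_le_via_sum:
  assumes "1 < \<alpha>" "\<alpha> < 2" "0 \<le> C0" "1 \<le> N3"
  shows "real (card {(k, k2, k3). (k, k1, k2, k3) \<in> Sres \<alpha> C0 m N N1 N2 N3})
    \<le> resonance_const \<alpha> C0 * (real N2 powr (2 - \<alpha>) * ln (2 + real N3) + N3)"
proof -
  define K where "K = level_const \<alpha> C0"
  define P where "P = real N2 powr (2 - \<alpha>) * ln (2 + real N3)"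
  define F where "F = {(k, k2, k3). (k, k1, k2, k3) \<in> Sres \<alpha> C0 m N N1 N2 N3}"
  have K: "0 \<le> K"
    using assms by (simp add: K_def level_const_nonneg)
  have ln: "1 \<le> ln (2 + real N3)"
    using assms(4) by (rule one_le_ln_two_plus)
  then have P: "0 \<le> P" "real N2 powr (2 - \<alpha>) \<le> P"
    by (auto simp: P_def mult_le_cancel_left1)
  have "real (card F) \<le> (11 + 28 * K) * (P + N3)"
  proof (cases "N2 < N3")
    case True
    then have "real (card F) \<le> (5 + 16 * K) * (P + N3)"
      using card_fibre_k1_le_of_less[of \<alpha> C0 N2 N3 k1 m N N1] assms by (simp add: F_def K_def P_def)
    also have "\<dots> \<le> (11 + 28 * K) * (P + N3)"
      using K P by (intro mult_right_mono) auto
    finally show ?thesis .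
  next
    case False
    define F1 where "F1 = {(k, k2, k3). (k, k1, k2, k3) \<in> Sres \<alpha> C0 m N N1 N2 N3 \<and> \<bar>2 * k2 - k1 - k3\<bar> < N3}"
    define F2 where "F2 = {(k, k2, k3). (k, k1, k2, k3) \<in> Sres \<alpha> C0 m N N1 N2 N3 \<and> N3 \<le> \<bar>2 * k2 - k1 - k3\<bar>}"
    have "real (card F1) \<le> (5 + 16 * K) * (real N3 powr (2 - \<alpha>) * ln (2 + real N3) + N3)"
      using card_fibre_k1_near_diagonal_le[of \<alpha> C0 N3 k1 m N N1 N2] assms by (simp add: F1_def K_def)
    also have "\<dots> \<le> (5 + 16 * K) * (P + N3)"
      using False K ln assms unfolding P_def
      by (intro mult_left_mono add_right_mono mult_right_mono powr_mono2) auto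
    finally have F1: "real (card F1) \<le> (5 + 16 * K) * (P + N3)" .
    have "real (card F2) \<le> 12 * K * real N2 powr (2 - \<alpha>) + 6 * N3"
      using card_fibre_k1_off_diagonal_le[of \<alpha> C0 N3 N2 k1 m N N1] assms False
      by (simp add: F2_def K_def)
    also have "\<dots> \<le> (6 + 12 * K) * (P + N3)"
    proof -
      have "12 * K * real N2 powr (2 - \<alpha>) \<le> 12 * K * P" "0 \<le> K * N3"
        using mult_left_mono[OF P(2), of "12 * K"] K by auto
      moreover have "(6 + 12 * K) * (P + N3) = 6 * P + 6 * N3 + 12 * K * P + 12 * (K * N3)"
        by (simp add: algebra_simps)
      ultimately show ?thesis
        using P by linarith
    qed
    finally have F2: "real (card F2) \<le> (6 + 12 * K) * (P + N3)" .
    have "F = F1 \<union> F2"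
      by (auto simp: F_def F1_def F2_def)
    then have "real (card F) \<le> real (card F1) + real (card F2)"
      using card_Un_le[of F1 F2] by simp
    then show ?thesis
      using F1 F2 by (simp add: algebra_simps)
  qed
  then show ?thesis
    by (simp add: F_def P_def K_def resonance_const_def)
qed

lemma card_fibre_k_le:
  assumes "1 < \<alpha>" "\<alpha> < 2" "0 \<le> C0" "1 \<le> N1" "1 \<le> N3"
  shows "real (card {(k1, k2, k3). (k, k1, k2, k3) \<in> Sres \<alpha> C0 m N N1 N2 N3}) \<le> resonance_const \<alpha> C0 * min
    (real (min N2 N3) powr (2 - \<alpha>) * ln (2 + real N1) + real N1)
    (real (min N1 N2) powr (2 - \<alpha>) * ln (2 + real N3) + real N3)"
proof -
  have half: "real (card {(k1, k2, k3). (k, k1, k2, k3) \<in> Sres \<alpha> C0 m N A B C})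
      \<le> resonance_const \<alpha> C0 * (real (min B C) powr (2 - \<alpha>) * ln (2 + real A) + A)"
    if "1 \<le> A" for A B C
    using card_fibre_k_le_via_k2[of \<alpha> C0 A k m N B C] card_fibre_k_le_via_k3[of \<alpha> C0 A k m N B C] assms that
    by (intro le_resonance_const_mult) (auto simp: min_def)
  have "card {(k1, k2, k3). (k, k1, k2, k3) \<in> Sres \<alpha> C0 m N N1 N2 N3}
      = card {(k1, k2, k3). (k, k1, k2, k3) \<in> Sres \<alpha> C0 m N N3 N2 N1}"
    by (rule card_eq_by_involution[where g = "\<lambda>(k1, k2, k3). (k3, k2, k1)"]) (auto simp: mem_Sres_swap)
  then show ?thesis
    using half[of N1 N2 N3] half[of N3 N2 N1] assms resonance_const_pos[of \<alpha> C0]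
    by (simp add: min_mult_distrib_left min.commute)
qed

lemma card_fibre_k1_le:
  assumes "1 < \<alpha>" "\<alpha> < 2" "0 \<le> C0" "1 \<le> N2" "1 \<le> N3"
  shows "real (card {(k, k2, k3). (k, k1, k2, k3) \<in> Sres \<alpha> C0 m N N1 N2 N3}) \<le> resonance_const \<alpha> C0 * min
    (real N3 powr (2 - \<alpha>) * ln (2 + real N2) + real N2)
    (real N2 powr (2 - \<alpha>) * ln (2 + real N3) + real N3)"
proof -
  have "real (card {(k, k2, k3). (k, k1, k2, k3) \<in> Sres \<alpha> C0 m N N1 N2 N3})
      \<le> resonance_const \<alpha> C0 * (real N3 powr (2 - \<alpha>) * ln (2 + real N2) + real N2)"
    using card_interval_minus_le[of N2 k1] assms
    by (intro le_resonance_const_mult card_fibre_k1_le_via_k2[where X = "{- int N2..N2} - {k1}"])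
       (auto simp: mem_Sres)
  then show ?thesis
    using card_fibre_k1_le_via_sum[of \<alpha> C0 N3 k1 m N N1 N2] assms resonance_const_pos[of \<alpha> C0]
    by (simp add: min_mult_distrib_left)
qed

lemma card_fibre_k2_le:
  assumes "1 < \<alpha>" "\<alpha> < 2" "0 \<le> C0" "1 \<le> N1" "1 \<le> N3"
  shows "real (card {(k, k1, k3). (k, k1, k2, k3) \<in> Sres \<alpha> C0 m N N1 N2 N3}) \<le> resonance_const \<alpha> C0 * min
    (real N3 powr (2 - \<alpha>) * ln (2 + real N1) + real N1)
    (real N1 powr (2 - \<alpha>) * ln (2 + real N3) + real N3)"
proof -
  have half: "real (card {(k, k1, k3). (k, k1, k2, k3) \<in> Sres \<alpha> C0 m N A N2 C})
      \<le> resonance_const \<alpha> C0 * (real C powr (2 - \<alpha>) * ln (2 + real A) + A)"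
    if "1 \<le> A" for A C
    using card_fibre_k2_le_via_k1[of \<alpha> C0 A k2 m N N2 C] assms that
    by (intro le_resonance_const_mult) auto
  have "card {(k, k1, k3). (k, k1, k2, k3) \<in> Sres \<alpha> C0 m N N1 N2 N3}
      = card {(k, k1, k3). (k, k1, k2, k3) \<in> Sres \<alpha> C0 m N N3 N2 N1}"
    by (rule card_eq_by_involution[where g = "\<lambda>(k, k1, k3). (k, k3, k1)"]) (auto simp: mem_Sres_swap)
  then show ?thesis
    using half[of N1 N3] half[of N3 N1] assms resonance_const_pos[of \<alpha> C0]
    by (simp add: min_mult_distrib_left)
qed

lemma card_fibre_k3_le:
  assumes "1 < \<alpha>" "\<alpha> < 2" "0 \<le> C0" "1 \<le> N1" "1 \<le> N2"
  shows "real (card {(k, k1, k2). (k, k1, k2, k3) \<in> Sres \<alpha> C0 m N N1 N2 N3}) \<le> resonance_const \<alpha> C0 * min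
    (real N1 powr (2 - \<alpha>) * ln (2 + real N2) + real N2)
    (real N2 powr (2 - \<alpha>) * ln (2 + real N1) + real N1)"
proof -
  have "card {(k, k1, k2). (k, k1, k2, k3) \<in> Sres \<alpha> C0 m N N1 N2 N3}
      = card {(k, k2, k1). (k, k3, k2, k1) \<in> Sres \<alpha> C0 m N N3 N2 N1}"
    by (rule card_eq_by_involution[where g = "\<lambda>(k, a, b). (k, b, a)"]) (auto simp: mem_Sres_swap)
  then show ?thesis
    using card_fibre_k1_le[of \<alpha> C0 N2 N1 k3 m N N3] assms by simp
qed

theorem corollary2p6:
  fixes \<alpha> C0 :: real
  assumes "1 < \<alpha>" and "\<alpha> < 2" and "0 < C0"
  shows "\<exists>C>0. \<forall>N N1 N2 N3 :: nat. \<forall>m :: real.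
    dyadic N \<longrightarrow> dyadic N1 \<longrightarrow> dyadic N2 \<longrightarrow> dyadic N3 \<longrightarrow>
    1 \<le> N1 \<longrightarrow> N1 \<le> N \<longrightarrow> 1 \<le> N2 \<longrightarrow> N2 \<le> N \<longrightarrow> 1 \<le> N3 \<longrightarrow> N3 \<le> N \<longrightarrow>
    (let S = Sres \<alpha> C0 m N N1 N2 N3 in
     (\<forall>k. real (card {(k1, k2, k3). (k, k1, k2, k3) \<in> S}) \<le> C * min
        (real (min N2 N3) powr (2 - \<alpha>) * ln (2 + real N1) + real N1)
        (real (min N1 N2) powr (2 - \<alpha>) * ln (2 + real N3) + real N3)) \<and>
     (\<forall>k1. real (card {(k, k2, k3). (k, k1, k2, k3) \<in> S}) \<le> C * min
        (real N3 powr (2 - \<alpha>) * ln (2 + real N2) + real N2)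
        (real N2 powr (2 - \<alpha>) * ln (2 + real N3) + real N3)) \<and>
     (\<forall>k2. real (card {(k, k1, k3). (k, k1, k2, k3) \<in> S}) \<le> C * min
        (real N3 powr (2 - \<alpha>) * ln (2 + real N1) + real N1)
        (real N1 powr (2 - \<alpha>) * ln (2 + real N3) + real N3)) \<and>
     (\<forall>k3. real (card {(k, k1, k2). (k, k1, k2, k3) \<in> S}) \<le> C * min
        (real N1 powr (2 - \<alpha>) * ln (2 + real N2) + real N2)
        (real N2 powr (2 - \<alpha>) * ln (2 + real N1) + real N1)))"
  unfolding Let_def
proof (intro exI[of _ "resonance_const \<alpha> C0"] conjI allI impI)
  show "0 < resonance_const \<alpha> C0"
    using assms by (simp add: resonance_const_pos)
qed (use assms card_fibre_k_le card_fibre_k1_le card_fibre_k2_le card_fibre_k3_le in \<open>simp_all add: less_imp_le\<close>)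

end
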